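(* Let $\mathcal{K}=\langle\mathcal{O},\mathcal{P}\rangle$ be a DL-safe hybrid knowledge base whose rules contain no function symbols, and let $\mathrm{lfp}(\mathrm{IFP}_{\mathcal{K}})=\langle I_T,I_F\rangle$ be its iterated fixpoint semantics. Then $\langle I_T,\ \mathrm{KA}(\mathcal{K})\setminus I_F\rangle$ is the alternating fixpoint partition $(P_\omega,N_\omega)$ of $\mathcal{K}$.
   Context: A hybrid knowledge base is a pair $\mathcal{K}=\langle\mathcal{O},\mathcal{P}\rangle$ where $\mathcal{O}$ is a set of description logic axioms (e.g. $\mathcal{ALC}$) and $\mathcal{P}$ is a finite set of normal rules $h\leftarrow a_1,\dots,a_n,\mathit{not}\,b_1,\dots,\mathit{not}\,b_r$. An atom in $\mathcal{P}$ is a DL-atom if its predicate occurs in $\mathcal{O}$; a rule is DL-safe if each of its variables occurs in some positive non-DL-atom of its body; $\mathcal{K}$ is DL-safe if all rules are. The grounding of $\mathcal{P}$ replaces variables by ground terms of $\mathcal{K}$ in all possible ways (here only constants, so it is finite). $\mathrm{KA}(\mathcal{K})$ is the set of ground atoms occurring in the grounding of $\mathcal{P}$. $\pi(\mathcal{O})$ is the standard first-order translation of the DL axioms and $O_{\mathcal{K},S}=\{\pi(\mathcal{O})\}\cup S$ for $S\subseteq\mathrm{KA}(\mathcal{K})$; $\models$ is first-order entailment. Iterated fixpoint semantics: a 3-valued interpretation is a pair $\langle I_T,I_F\rangle$ of disjoint subsets of $\mathrm{KA}(\mathcal{K})$ ($a$ true if $a\in I_T$, false if $a\in I_F$), ordered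 by $\langle I_T,I_F\rangle\le\langle I_T',I_F'\rangle$ iff $I_T\subseteq I_T'$ and $I_F\subseteq I_F'$. For $\mathcal{I}=\langle I_T,I_F\rangle$: $T^{\mathcal{K}}_{\mathcal{I}}(Tr)=\{a\in\mathrm{KA}(\mathcal{K})\mid$ some clause $a\leftarrow a_1,\dots,a_n,\mathit{not}\,b_1,\dots,\mathit{not}\,b_r$ of the grounding of $\mathcal{P}$ has each $a_i$ true in $\mathcal{I}$ or in $Tr$ and each $b_j$ false in $\mathcal{I}\}\cup\{a\in\mathrm{KA}(\mathcal{K})\mid O_{\mathcal{K},I_T\cup Tr}\models a\}$; $F^{\mathcal{K}}_{\mathcal{I}}(Fa)=\{a\in\mathrm{KA}(\mathcal{K})\mid O_{\mathcal{K},I_T}\models\neg a$, or for every clause $a\leftarrow a_1,\dots,a_n,\mathit{not}\,b_1,\dots,\mathit{not}\,b_r$ of the grounding of $\mathcal{P}$ some $a_i$ is false in $\mathcal{I}$ or in $Fa$, or some $b_j$ is true in $\mathcal{I}\}\cap\{a\in\mathrm{KA}(\mathcal{K})\mid O_{\mathcal{K},\mathrm{KA}(\mathcal{K})\setminus(I_F\cup Fa)}\not\models a\}$. These are monotonic; $\mathrm{IFP}_{\mathcal{K}}(\mathcal{I})=\langle\mathrm{lfp}(T^{\mathcal{K}}_{\mathcal{I}}),\mathrm{gfp}(F^{\mathcal{K}}_{\mathcal{I}})\rangle$ is monotonic w.r.t. $\le$, and the iterated fixpoint semantics is its least fixpoint $\mathrm{lfp}(\mathrm{IFP}_{\mathcal{K}})$.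 Alternating fixpoint partition (for the ground $\mathcal{K}$): for a positive (negation-free) ground $\mathcal{K}'=\langle\mathcal{O},\mathcal{P}'\rangle$ and $S\subseteq\mathrm{KA}(\mathcal{K})$, $R_{\mathcal{K}'}(S)$ is the set of heads of rules of $\mathcal{P}'$ whose body atoms all lie in $S$, $D_{\mathcal{K}'}(S)=\{a\in\mathrm{KA}(\mathcal{K})\mid O_{\mathcal{K},S}\models a\}$, and $T_{\mathcal{K}'}(S)=R_{\mathcal{K}'}(S)\cup D_{\mathcal{K}'}(S)$ (monotonic). For $S\subseteq\mathrm{KA}(\mathcal{K})$: $\mathcal{K}/S=\langle\mathcal{O},\mathcal{P}/S\rangle$ where $\mathcal{P}/S$ contains $h\leftarrow a_1,\dots,a_n$ for each ground rule $h\leftarrow a_1,\dots,a_n,\mathit{not}\,b_1,\dots,\mathit{not}\,b_r$ with $\{b_1,\dots,b_r\}\cap S=\emptyset$; $\mathcal{K}//S=\langle\mathcal{O},\mathcal{P}//S\rangle$ where $\mathcal{P}//S$ contains $h\leftarrow a_1,\dots,a_n$ for each such ground rule with $\{b_1,\dots,b_r\}\cap S=\emptyset$ and $O_{\mathcal{K},S}\not\models\neg h$. Let $\Gamma_{\mathcal{K}}(S)=\mathrm{lfp}(T_{\mathcal{K}/S})$ and $\Gamma'_{\mathcal{K}}(S)=\mathrm{lfp}(T_{\mathcal{K}//S})$. Define $P_0=\emptyset$, $N_0=\mathrm{KA}(\mathcal{K})$, $P_{n+1}=\Gamma_{\mathcal{K}}(N_n)$, $N_{n+1}=\Gamma'_{\mathcal{K}}(P_n)$,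 $P_\omega=\bigcup_i P_i$, $N_\omega=\bigcap_i N_i$. The pair $(P_\omega,N_\omega)$ is the alternating fixpoint partition of $\mathcal{K}$. *)

theory Defs
  imports Main "HOL-Library.Product_Order"
begin

text \<open>Predicates have type 'p, constants type 'c, variables type 'v.
  Concept names and role names of the ontology are predicates (unary resp. binary).\<close>

datatype ('p) concept =
    CTop | CBot | CName 'p | CNot "'p concept"
  | CAnd "'p concept" "'p concept" | COr "'p concept" "'p concept"
  | CEx 'p "'p concept" | CAll 'p "'p concept"

datatype ('p, 'c) axiom =
    GCI "'p concept" "'p concept"
  | CAssert "'p concept" 'c
  | RAssert 'p 'c 'c

datatype ('v, 'c) rterm = Var 'v | Cst 'c

datatype ('p, 't) atom = Atom 'p "'t list"

record ('p, 'v, 'c) rule =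
  head :: "('p, ('v, 'c) rterm) atom"
  pos  :: "('p, ('v, 'c) rterm) atom list"
  neg  :: "('p, ('v, 'c) rterm) atom list"

type_synonym ('p, 'c) gatom = "('p, 'c) atom"

text \<open>Ground rules: (head, positive body, negative body).\<close>
type_synonym ('p, 'c) grule = "('p, 'c) gatom \<times> ('p, 'c) gatom list \<times> ('p, 'c) gatom list"

fun concept_preds :: "'p concept \<Rightarrow> 'p set" where
  "concept_preds CTop = {}"
| "concept_preds CBot = {}"
| "concept_preds (CName A) = {A}"
| "concept_preds (CNot C) = concept_preds C"
| "concept_preds (CAnd C D) = concept_preds C \<union> concept_preds D"
| "concept_preds (COr C D) = concept_preds C \<union> concept_preds D"
| "concept_preds (CEx R C) = insert R (concept_preds C)"
| "concept_preds (CAll R C) = insert R (concept_preds C)"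

fun axiom_preds :: "('p, 'c) axiom \<Rightarrow> 'p set" where
  "axiom_preds (GCI C D) = concept_preds C \<union> concept_preds D"
| "axiom_preds (CAssert C a) = concept_preds C"
| "axiom_preds (RAssert R a b) = {R}"

fun axiom_consts :: "('p, 'c) axiom \<Rightarrow> 'c set" where
  "axiom_consts (GCI C D) = {}"
| "axiom_consts (CAssert C a) = {a}"
| "axiom_consts (RAssert R a b) = {a, b}"

definition onto_preds :: "('p, 'c) axiom set \<Rightarrow> 'p set" where
  "onto_preds Ont = (\<Union>ax\<in>Ont. axiom_preds ax)"

fun pred_of :: "('p, 't) atom \<Rightarrow> 'p" where
  "pred_of (Atom p ts) = p"

fun args_of :: "('p, 't) atom \<Rightarrow> 't list" where
  "args_of (Atom p ts) = ts"

fun term_vars :: "('v, 'c) rterm \<Rightarrow> 'v set" where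
  "term_vars (Var v) = {v}" | "term_vars (Cst c) = {}"

fun term_consts :: "('v, 'c) rterm \<Rightarrow> 'c set" where
  "term_consts (Var v) = {}" | "term_consts (Cst c) = {c}"

definition atom_vars :: "('p, ('v, 'c) rterm) atom \<Rightarrow> 'v set" where
  "atom_vars a = (\<Union>t\<in>set (args_of a). term_vars t)"

definition atom_consts :: "('p, ('v, 'c) rterm) atom \<Rightarrow> 'c set" where
  "atom_consts a = (\<Union>t\<in>set (args_of a). term_consts t)"

definition rule_atoms :: "('p, 'v, 'c) rule \<Rightarrow> ('p, ('v, 'c) rterm) atom set" where
  "rule_atoms r = insert (head r) (set (pos r) \<union> set (neg r))"

definition rule_vars :: "('p, 'v, 'c) rule \<Rightarrow> 'v set" where
  "rule_vars r = (\<Union>a\<in>rule_atoms r. atom_vars a)"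

definition rule_consts :: "('p, 'v, 'c) rule \<Rightarrow> 'c set" where
  "rule_consts r = (\<Union>a\<in>rule_atoms r. atom_consts a)"

definition is_DL_atom :: "('p, 'c) axiom set \<Rightarrow> ('p, 't) atom \<Rightarrow> bool" where
  "is_DL_atom Ont a \<longleftrightarrow> pred_of a \<in> onto_preds Ont"

definition DL_safe_rule :: "('p, 'c) axiom set \<Rightarrow> ('p, 'v, 'c) rule \<Rightarrow> bool" where
  "DL_safe_rule Ont r \<longleftrightarrow>
     (\<forall>v\<in>rule_vars r. \<exists>a\<in>set (pos r). \<not> is_DL_atom Ont a \<and> v \<in> atom_vars a)"

definition DL_safe :: "('p, 'c) axiom set \<Rightarrow> ('p, 'v, 'c) rule set \<Rightarrow> bool" where
  "DL_safe Ont P \<longleftrightarrow> (\<forall>r\<in>P. DL_safe_rule Ont r)"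

text \<open>Ground terms of K: the constants occurring in K (no function symbols).\<close>
definition KB_consts :: "('p, 'c) axiom set \<Rightarrow> ('p, 'v, 'c) rule set \<Rightarrow> 'c set" where
  "KB_consts Ont P = (\<Union>ax\<in>Ont. axiom_consts ax) \<union> (\<Union>r\<in>P. rule_consts r)"

fun subst_term :: "('v \<Rightarrow> 'c) \<Rightarrow> ('v, 'c) rterm \<Rightarrow> 'c" where
  "subst_term \<sigma> (Var v) = \<sigma> v" | "subst_term \<sigma> (Cst c) = c"

fun subst_atom :: "('v \<Rightarrow> 'c) \<Rightarrow> ('p, ('v, 'c) rterm) atom \<Rightarrow> ('p, 'c) gatom" where
  "subst_atom \<sigma> (Atom p ts) = Atom p (map (subst_term \<sigma>) ts)"

definition ground_rule :: "('v \<Rightarrow> 'c) \<Rightarrow> ('p, 'v, 'c) rule \<Rightarrow> ('p, 'c) grule" where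
  "ground_rule \<sigma> r = (subst_atom \<sigma> (head r), map (subst_atom \<sigma>) (pos r), map (subst_atom \<sigma>) (neg r))"

definition grounding :: "('p, 'c) axiom set \<Rightarrow> ('p, 'v, 'c) rule set \<Rightarrow> ('p, 'c) grule set" where
  "grounding Ont P = {ground_rule \<sigma> r | \<sigma> r. r \<in> P \<and> (\<forall>v\<in>rule_vars r. \<sigma> v \<in> KB_consts Ont P)}"

definition grule_atoms :: "('p, 'c) grule \<Rightarrow> ('p, 'c) gatom set" where
  "grule_atoms g = (case g of (h, ps, ns) \<Rightarrow> insert h (set ps \<union> set ns))"

definition KA :: "('p, 'c) axiom set \<Rightarrow> ('p, 'v, 'c) rule set \<Rightarrow> ('p, 'c) gatom set" where
  "KA Ont P = (\<Union>g\<in>grounding Ont P. grule_atoms g)"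

text \<open>First-order structures; the domain is a nonempty set (of naturals, which suffices
  for first-order entailment over the finite signature at hand by Loewenheim-Skolem).\<close>
record ('p, 'c) fo_struct =
  dom  :: "nat set"
  cint :: "'c \<Rightarrow> nat"
  pint :: "'p \<Rightarrow> nat list \<Rightarrow> bool"

definition wf_struct :: "('p, 'c) fo_struct \<Rightarrow> bool" where
  "wf_struct M \<longleftrightarrow> dom M \<noteq> {} \<and> (\<forall>c. cint M c \<in> dom M)"

fun csat :: "('p, 'c) fo_struct \<Rightarrow> 'p concept \<Rightarrow> nat \<Rightarrow> bool" where
  "csat M CTop x = True"
| "csat M CBot x = False"
| "csat M (CName A) x = pint M A [x]"
| "csat M (CNot C) x = (\<not> csat M C x)"
| "csat M (CAnd C D) x = (csat M C x \<and> csat M D x)"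
| "csat M (COr C D) x = (csat M C x \<or> csat M D x)"
| "csat M (CEx R C) x = (\<exists>y\<in>dom M. pint M R [x, y] \<and> csat M C y)"
| "csat M (CAll R C) x = (\<forall>y\<in>dom M. pint M R [x, y] \<longrightarrow> csat M C y)"

fun sat_axiom :: "('p, 'c) fo_struct \<Rightarrow> ('p, 'c) axiom \<Rightarrow> bool" where
  "sat_axiom M (GCI C D) = (\<forall>x\<in>dom M. csat M C x \<longrightarrow> csat M D x)"
| "sat_axiom M (CAssert C a) = csat M C (cint M a)"
| "sat_axiom M (RAssert R a b) = pint M R [cint M a, cint M b]"

fun holds :: "('p, 'c) fo_struct \<Rightarrow> ('p, 'c) gatom \<Rightarrow> bool" where
  "holds M (Atom p cs) = pint M p (map (cint M) cs)"

definition is_model :: "('p, 'c) axiom set \<Rightarrow> ('p, 'c) gatom set \<Rightarrow> ('p, 'c) fo_struct \<Rightarrow> bool" where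
  "is_model Ont S M \<longleftrightarrow> wf_struct M \<and> (\<forall>ax\<in>Ont. sat_axiom M ax) \<and> (\<forall>a\<in>S. holds M a)"

definition entails :: "('p, 'c) axiom set \<Rightarrow> ('p, 'c) gatom set \<Rightarrow> ('p, 'c) gatom \<Rightarrow> bool" where
  "entails Ont S a \<longleftrightarrow> (\<forall>M. is_model Ont S M \<longrightarrow> holds M a)"

definition entails_neg :: "('p, 'c) axiom set \<Rightarrow> ('p, 'c) gatom set \<Rightarrow> ('p, 'c) gatom \<Rightarrow> bool" where
  "entails_neg Ont S a \<longleftrightarrow> (\<forall>M. is_model Ont S M \<longrightarrow> \<not> holds M a)"

text \<open>3-valued interpretations are pairs (I_T, I_F); the order is the componentwise
  (product) order of HOL-Library.Product_Order.\<close>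

definition T_op :: "('p, 'c) axiom set \<Rightarrow> ('p, 'v, 'c) rule set
    \<Rightarrow> ('p, 'c) gatom set \<times> ('p, 'c) gatom set \<Rightarrow> ('p, 'c) gatom set \<Rightarrow> ('p, 'c) gatom set" where
  "T_op Ont P I Tr =
     {a \<in> KA Ont P. \<exists>ps ns. (a, ps, ns) \<in> grounding Ont P
        \<and> (\<forall>ai\<in>set ps. ai \<in> fst I \<or> ai \<in> Tr) \<and> (\<forall>b\<in>set ns. b \<in> snd I)}
   \<union> {a \<in> KA Ont P. entails Ont (fst I \<union> Tr) a}"

definition F_op :: "('p, 'c) axiom set \<Rightarrow> ('p, 'v, 'c) rule set
    \<Rightarrow> ('p, 'c) gatom set \<times> ('p, 'c) gatom set \<Rightarrow> ('p, 'c) gatom set \<Rightarrow> ('p, 'c) gatom set" where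
  "F_op Ont P I Fa =
     {a \<in> KA Ont P. entails_neg Ont (fst I) a
        \<or> (\<forall>ps ns. (a, ps, ns) \<in> grounding Ont P \<longrightarrow>
              (\<exists>ai\<in>set ps. ai \<in> snd I \<or> ai \<in> Fa) \<or> (\<exists>b\<in>set ns. b \<in> fst I))}
   \<inter> {a \<in> KA Ont P. \<not> entails Ont (KA Ont P - (snd I \<union> Fa)) a}"

definition IFP :: "('p, 'c) axiom set \<Rightarrow> ('p, 'v, 'c) rule set
    \<Rightarrow> ('p, 'c) gatom set \<times> ('p, 'c) gatom set \<Rightarrow> ('p, 'c) gatom set \<times> ('p, 'c) gatom set" where
  "IFP Ont P I = (lfp (T_op Ont P I), gfp (F_op Ont P I))"

text \<open>T_{K'} for a positive ground program P' (given as (head, body) pairs).\<close>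
definition T_pos :: "('p, 'c) axiom set \<Rightarrow> ('p, 'v, 'c) rule set
    \<Rightarrow> (('p, 'c) gatom \<times> ('p, 'c) gatom list) set \<Rightarrow> ('p, 'c) gatom set \<Rightarrow> ('p, 'c) gatom set" where
  "T_pos Ont P P' S = {h. \<exists>bs. (h, bs) \<in> P' \<and> set bs \<subseteq> S} \<union> {a \<in> KA Ont P. entails Ont S a}"

definition reduct1 :: "('p, 'c) axiom set \<Rightarrow> ('p, 'v, 'c) rule set \<Rightarrow> ('p, 'c) gatom set
    \<Rightarrow> (('p, 'c) gatom \<times> ('p, 'c) gatom list) set" where
  "reduct1 Ont P S = {(h, ps) | h ps ns. (h, ps, ns) \<in> grounding Ont P \<and> set ns \<inter> S = {}}"

definition reduct2 :: "('p, 'c) axiom set \<Rightarrow> ('p, 'v, 'c) rule set \<Rightarrow> ('p, 'c) gatom set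
    \<Rightarrow> (('p, 'c) gatom \<times> ('p, 'c) gatom list) set" where
  "reduct2 Ont P S = {(h, ps) | h ps ns. (h, ps, ns) \<in> grounding Ont P \<and> set ns \<inter> S = {}
                                       \<and> \<not> entails_neg Ont S h}"

definition Gamma :: "('p, 'c) axiom set \<Rightarrow> ('p, 'v, 'c) rule set \<Rightarrow> ('p, 'c) gatom set \<Rightarrow> ('p, 'c) gatom set" where
  "Gamma Ont P S = lfp (T_pos Ont P (reduct1 Ont P S))"

definition Gamma' :: "('p, 'c) axiom set \<Rightarrow> ('p, 'v, 'c) rule set \<Rightarrow> ('p, 'c) gatom set \<Rightarrow> ('p, 'c) gatom set" where
  "Gamma' Ont P S = lfp (T_pos Ont P (reduct2 Ont P S))"

fun PN :: "('p, 'c) axiom set \<Rightarrow> ('p, 'v, 'c) rule set \<Rightarrow> nat \<Rightarrow> ('p, 'c) gatom set \<times> ('p, 'c) gatom set" where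
  "PN Ont P 0 = ({}, KA Ont P)"
| "PN Ont P (Suc n) = (Gamma Ont P (snd (PN Ont P n)), Gamma' Ont P (fst (PN Ont P n)))"

definition P_omega :: "('p, 'c) axiom set \<Rightarrow> ('p, 'v, 'c) rule set \<Rightarrow> ('p, 'c) gatom set" where
  "P_omega Ont P = (\<Union>n. fst (PN Ont P n))"

definition N_omega :: "('p, 'c) axiom set \<Rightarrow> ('p, 'v, 'c) rule set \<Rightarrow> ('p, 'c) gatom set" where
  "N_omega Ont P = (\<Inter>n. snd (PN Ont P n))"

end

theory Submission
  imports Defs "HOL-Library.FuncSet"
begin

text \<open>Both semantics are driven by the same operators: for a 3-valued interpretation
  \<open>(T, F)\<close>, the operator \<open>T_op\<close> is the positive-program operator \<open>T_pos\<close> of the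
  reduct \<open>K / (KA - F)\<close>, and the complement of \<open>F_op\<close> is \<open>T_pos\<close> of the reduct \<open>K // T\<close>.
  Hence every fixpoint \<open>(I\<^sub>T, I\<^sub>F)\<close> of \<open>IFP\<close> bounds the alternating sequence,
  \<open>P\<^sub>n \<subseteq> I\<^sub>T\<close> and \<open>KA - I\<^sub>F \<subseteq> N\<^sub>n\<close>; conversely, as \<open>KA\<close> is finite the
  sequence becomes stationary, so \<open>\<Gamma> N\<^sub>\<omega> = P\<^sub>\<omega>\<close> and \<open>\<Gamma>' P\<^sub>\<omega> = N\<^sub>\<omega>\<close>, which makes
  \<open>(P\<^sub>\<omega>, KA - N\<^sub>\<omega>)\<close> a pre-fixpoint of \<open>IFP\<close> and thus an upper bound of its least
  fixpoint.\<close>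

lemma entails_mono: "S \<subseteq> S' \<Longrightarrow> entails Ont S a \<Longrightarrow> entails Ont S' a"
  unfolding entails_def is_model_def by blast

lemma entails_neg_mono: "S \<subseteq> S' \<Longrightarrow> entails_neg Ont S a \<Longrightarrow> entails_neg Ont S' a"
  unfolding entails_neg_def is_model_def by blast

lemma grounding_atoms_in_KA:
  assumes "(h, ps, ns) \<in> grounding Ont P"
  shows "h \<in> KA Ont P" "set ps \<subseteq> KA Ont P" "set ns \<subseteq> KA Ont P"
  using assms unfolding KA_def grule_atoms_def by fastforce+

lemma finite_term_vars [simp]: "finite (term_vars t)"
  by (cases t) auto

lemma finite_term_consts [simp]: "finite (term_consts t)"
  by (cases t) auto

lemma finite_axiom_consts [simp]: "finite (axiom_consts ax)"
  by (cases ax) auto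

lemma finite_rule_vars: "finite (rule_vars r)"
  unfolding rule_vars_def rule_atoms_def atom_vars_def by auto

lemma finite_KB_consts: "finite Ont \<Longrightarrow> finite P \<Longrightarrow> finite (KB_consts Ont P)"
  unfolding KB_consts_def rule_consts_def rule_atoms_def atom_consts_def by auto

lemma subst_atom_cong:
  assumes "\<forall>v\<in>atom_vars a. \<sigma> v = \<tau> v"
  shows "subst_atom \<sigma> a = subst_atom \<tau> a"
proof (cases a)
  case (Atom p ts)
  have "subst_term \<sigma> t = subst_term \<tau> t" if "t \<in> set ts" for t
    using assms that Atom by (cases t) (auto simp: atom_vars_def)
  then show ?thesis using Atom by simp
qed

lemma ground_rule_cong:
  assumes "\<forall>v\<in>rule_vars r. \<sigma> v = \<tau> v"
  shows "ground_rule \<sigma> r = ground_rule \<tau> r"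
proof -
  have "subst_atom \<sigma> a = subst_atom \<tau> a" if "a \<in> rule_atoms r" for a
    using assms that by (intro subst_atom_cong) (auto simp: rule_vars_def)
  then show ?thesis
    unfolding ground_rule_def by (auto simp: rule_atoms_def)
qed

lemma finite_grounding:
  assumes "finite Ont" "finite P"
  shows "finite (grounding Ont P)"
proof -
  let ?C = "KB_consts Ont P"
  let ?G = "\<Union>r\<in>P. (\<lambda>\<sigma>. ground_rule \<sigma> r) ` (rule_vars r \<rightarrow>\<^sub>E ?C)"
  have "grounding Ont P \<subseteq> ?G"
  proof
    fix g assume "g \<in> grounding Ont P"
    then obtain \<sigma> r where g: "g = ground_rule \<sigma> r" "r \<in> P" "\<forall>v\<in>rule_vars r. \<sigma> v \<in> ?C"
      unfolding grounding_def by blast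
    have "g = ground_rule (restrict \<sigma> (rule_vars r)) r"
      using g(1) by (simp add: ground_rule_cong)
    moreover have "restrict \<sigma> (rule_vars r) \<in> rule_vars r \<rightarrow>\<^sub>E ?C"
      using g(3) by auto
    ultimately show "g \<in> ?G" using g(2) by blast
  qed
  moreover have "finite ?G"
    using assms by (auto intro!: finite_PiE simp: finite_rule_vars finite_KB_consts)
  ultimately show ?thesis by (rule finite_subset)
qed

lemma finite_KA: "finite Ont \<Longrightarrow> finite P \<Longrightarrow> finite (KA Ont P)"
  unfolding KA_def grule_atoms_def
  by (rule finite_UN_I[OF finite_grounding]) (auto split: prod.splits)

lemma T_pos_mono: "P1 \<subseteq> P2 \<Longrightarrow> S1 \<subseteq> S2 \<Longrightarrow> T_pos Ont P P1 S1 \<subseteq> T_pos Ont P P2 S2"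
  unfolding T_pos_def using entails_mono by blast

lemma mono_T_pos: "mono (T_pos Ont P P')"
  by (rule monoI) (rule T_pos_mono, simp_all)

lemma T_pos_reduct_subset_KA:
  "T_pos Ont P (reduct1 Ont P S) (KA Ont P) \<subseteq> KA Ont P"
  "T_pos Ont P (reduct2 Ont P S) (KA Ont P) \<subseteq> KA Ont P"
  unfolding T_pos_def reduct1_def reduct2_def using grounding_atoms_in_KA by blast+

lemma Gamma_subset_KA: "Gamma Ont P S \<subseteq> KA Ont P"
  unfolding Gamma_def by (rule lfp_lowerbound) (rule T_pos_reduct_subset_KA)

lemma Gamma'_subset_KA: "Gamma' Ont P S \<subseteq> KA Ont P"
  unfolding Gamma'_def by (rule lfp_lowerbound) (rule T_pos_reduct_subset_KA)

lemma reduct1_antimono: "S1 \<subseteq> S2 \<Longrightarrow> reduct1 Ont P S2 \<subseteq> reduct1 Ont P S1"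
  unfolding reduct1_def by blast

lemma reduct2_antimono: "S1 \<subseteq> S2 \<Longrightarrow> reduct2 Ont P S2 \<subseteq> reduct2 Ont P S1"
  unfolding reduct2_def using entails_neg_mono by blast

lemma Gamma_antimono: "S1 \<subseteq> S2 \<Longrightarrow> Gamma Ont P S2 \<subseteq> Gamma Ont P S1"
  unfolding Gamma_def by (intro lfp_mono T_pos_mono reduct1_antimono) simp_all

lemma Gamma'_antimono: "S1 \<subseteq> S2 \<Longrightarrow> Gamma' Ont P S2 \<subseteq> Gamma' Ont P S1"
  unfolding Gamma'_def by (intro lfp_mono T_pos_mono reduct2_antimono) simp_all

lemma T_op_eq_T_pos_reduct1:
  "T_op Ont P (T, F) X = T_pos Ont P (reduct1 Ont P (KA Ont P - F)) (T \<union> X)"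
  unfolding T_op_def T_pos_def reduct1_def using grounding_atoms_in_KA by fastforce

lemma KA_Diff_F_op_eq_T_pos_reduct2:
  "KA Ont P - F_op Ont P (T, F) Y = T_pos Ont P (reduct2 Ont P T) (KA Ont P - (F \<union> Y))"
  unfolding F_op_def T_pos_def reduct2_def using grounding_atoms_in_KA by fastforce

lemma T_op_mono:
  "T \<subseteq> T' \<Longrightarrow> F \<subseteq> F' \<Longrightarrow> X \<subseteq> Y \<Longrightarrow> T_op Ont P (T, F) X \<subseteq> T_op Ont P (T', F') Y"
  unfolding T_op_eq_T_pos_reduct1 by (intro T_pos_mono reduct1_antimono) blast+

lemma F_op_subset_KA: "F_op Ont P I Y \<subseteq> KA Ont P"
  unfolding F_op_def by blast

lemma F_op_mono:
  assumes "T \<subseteq> T'" "F \<subseteq> F'" "X \<subseteq> Y"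
  shows "F_op Ont P (T, F) X \<subseteq> F_op Ont P (T', F') Y"
proof -
  have "KA Ont P - F_op Ont P (T', F') Y \<subseteq> KA Ont P - F_op Ont P (T, F) X"
    unfolding KA_Diff_F_op_eq_T_pos_reduct2
    using assms by (intro T_pos_mono reduct2_antimono) blast+
  then show ?thesis
    using F_op_subset_KA by blast
qed

lemma mono_T_op: "mono (T_op Ont P I)"
  by (cases I) (simp add: mono_def T_op_mono)

lemma mono_F_op: "mono (F_op Ont P I)"
  by (cases I) (simp add: mono_def F_op_mono)

lemma mono_IFP: "mono (IFP Ont P)"
proof (rule monoI)
  fix I J :: "('a, 'b) gatom set \<times> ('a, 'b) gatom set"
  assume "I \<le> J"
  then obtain T F T' F' where IJ: "I = (T, F)" "J = (T', F')" "T \<subseteq> T'" "F \<subseteq> F'"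
    by (cases I, cases J) (auto simp: less_eq_prod_def)
  have "lfp (T_op Ont P I) \<subseteq> lfp (T_op Ont P J)"
    unfolding IJ by (intro lfp_mono T_op_mono IJ) simp
  moreover have "gfp (F_op Ont P I) \<subseteq> gfp (F_op Ont P J)"
    unfolding IJ by (intro gfp_mono F_op_mono IJ) simp
  ultimately show "IFP Ont P I \<le> IFP Ont P J"
    by (simp add: IFP_def less_eq_prod_def)
qed

lemma Gamma_Diff_IFP_false_subset_true:
  assumes "IFP Ont P (IT, IF) = (IT, IF)"
  shows "Gamma Ont P (KA Ont P - IF) \<subseteq> IT"
  unfolding Gamma_def
proof (rule lfp_lowerbound)
  have "lfp (T_op Ont P (IT, IF)) = IT"
    using assms by (simp add: IFP_def)
  then have "T_op Ont P (IT, IF) IT = IT"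
    using lfp_fixpoint[OF mono_T_op, of Ont P "(IT, IF)"] by simp
  then show "T_pos Ont P (reduct1 Ont P (KA Ont P - IF)) IT \<subseteq> IT"
    by (simp add: T_op_eq_T_pos_reduct1)
qed

lemma KA_Diff_IFP_false_subset_Gamma':
  assumes "IFP Ont P (IT, IF) = (IT, IF)"
  shows "KA Ont P - IF \<subseteq> Gamma' Ont P IT"
proof -
  let ?A = "KA Ont P" and ?G = "Gamma' Ont P IT"
  have "?A - F_op Ont P (IT, IF) (?A - ?G) \<subseteq> T_pos Ont P (reduct2 Ont P IT) ?G"
    unfolding KA_Diff_F_op_eq_T_pos_reduct2 by (rule T_pos_mono) blast+
  also have "\<dots> = ?G"
    unfolding Gamma'_def by (rule lfp_fixpoint[OF mono_T_pos])
  finally have "?A - ?G \<subseteq> F_op Ont P (IT, IF) (?A - ?G)"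
    by blast
  then have "?A - ?G \<subseteq> gfp (F_op Ont P (IT, IF))"
    by (rule gfp_upperbound)
  also have "\<dots> = IF"
    using assms by (simp add: IFP_def)
  finally show ?thesis by blast
qed

lemma PN_bounded_by_IFP_fixpoint:
  assumes "IFP Ont P (IT, IF) = (IT, IF)"
  shows "fst (PN Ont P n) \<subseteq> IT \<and> KA Ont P - IF \<subseteq> snd (PN Ont P n)"
proof (induction n)
  case (Suc n)
  then have "Gamma Ont P (snd (PN Ont P n)) \<subseteq> IT"
    using Gamma_antimono Gamma_Diff_IFP_false_subset_true[OF assms] by blast
  moreover have "KA Ont P - IF \<subseteq> Gamma' Ont P (fst (PN Ont P n))"
    using Suc Gamma'_antimono KA_Diff_IFP_false_subset_Gamma'[OF assms] by blast
  ultimately show ?case by simp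
qed simp

lemma lfp_T_op_subset_Gamma_fixpoint:
  assumes "Gamma Ont P N = Pw" and "N \<subseteq> KA Ont P"
  shows "lfp (T_op Ont P (Pw, KA Ont P - N)) \<subseteq> Pw"
proof (rule lfp_lowerbound)
  have "KA Ont P - (KA Ont P - N) = N"
    using assms(2) by blast
  moreover have "T_pos Ont P (reduct1 Ont P N) Pw = Pw"
    using lfp_fixpoint[OF mono_T_pos, of Ont P "reduct1 Ont P N"] assms(1)
    unfolding Gamma_def by simp
  ultimately show "T_op Ont P (Pw, KA Ont P - N) Pw \<subseteq> Pw"
    by (simp add: T_op_eq_T_pos_reduct1)
qed

lemma gfp_F_op_subset_Gamma'_fixpoint:
  assumes "Gamma' Ont P Pw = N"
  shows "gfp (F_op Ont P (Pw, KA Ont P - N)) \<subseteq> KA Ont P - N"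
proof -
  let ?A = "KA Ont P" and ?T = "T_pos Ont P (reduct2 Ont P Pw)"
  define Y where "Y = gfp (F_op Ont P (Pw, ?A - N))"
  have Y_fixpoint: "F_op Ont P (Pw, ?A - N) Y = Y"
    unfolding Y_def by (rule gfp_fixpoint[OF mono_F_op])
  have N_fixpoint: "?T N = N"
    using lfp_fixpoint[OF mono_T_pos, of Ont P "reduct2 Ont P Pw"] assms
    unfolding Gamma'_def by simp
  have "?A - ((?A - N) \<union> Y) = N - Y"
    using assms Gamma'_subset_KA by blast
  then have "?T (N - Y) = ?A - Y"
    using KA_Diff_F_op_eq_T_pos_reduct2[of Ont P Pw "?A - N" Y] Y_fixpoint by simp
  moreover have "?T (N - Y) \<subseteq> N"
    using monoD[OF mono_T_pos, of "N - Y" N Ont P "reduct2 Ont P Pw"] N_fixpoint by blast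
  ultimately have "lfp ?T \<subseteq> N - Y"
    by (intro lfp_lowerbound) blast
  moreover have "Y \<subseteq> ?A"
    using F_op_subset_KA Y_fixpoint by blast
  ultimately show ?thesis
    using assms unfolding Y_def Gamma'_def by blast
qed

lemma lfp_IFP_le_alternating_fixpoint:
  assumes "Gamma Ont P N = Pw" and "Gamma' Ont P Pw = N"
  shows "lfp (IFP Ont P) \<le> (Pw, KA Ont P - N)"
proof (rule lfp_lowerbound)
  have "N \<subseteq> KA Ont P"
    using assms(2) Gamma'_subset_KA by blast
  then show "IFP Ont P (Pw, KA Ont P - N) \<le> (Pw, KA Ont P - N)"
    using lfp_T_op_subset_Gamma_fixpoint[OF assms(1)] gfp_F_op_subset_Gamma'_fixpoint[OF assms(2)]
    by (simp add: IFP_def less_eq_prod_def)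
qed

lemma PN_subset_KA: "fst (PN Ont P n) \<subseteq> KA Ont P \<and> snd (PN Ont P n) \<subseteq> KA Ont P"
  by (cases n) (auto simp: Gamma_subset_KA Gamma'_subset_KA)

lemma PN_Suc_mono:
  "fst (PN Ont P n) \<subseteq> fst (PN Ont P (Suc n)) \<and> snd (PN Ont P (Suc n)) \<subseteq> snd (PN Ont P n)"
proof (induction n)
  case (Suc n)
  then show ?case by (simp add: Gamma_antimono Gamma'_antimono)
qed (simp add: Gamma'_subset_KA)

lemma mono_fst_PN: "mono (\<lambda>n. fst (PN Ont P n))"
  unfolding mono_iff_le_Suc using PN_Suc_mono by blast

lemma antimono_snd_PN: "antimono (\<lambda>n. snd (PN Ont P n))"
  unfolding antimono_iff_le_Suc using PN_Suc_mono by blast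

lemma PN_eventually_constant:
  assumes "finite Ont" and "finite P"
  obtains N where "\<And>n. N \<le> n \<Longrightarrow> PN Ont P n = PN Ont P N"
proof -
  let ?A = "KA Ont P"
  define f where "f n = (fst (PN Ont P n), ?A - snd (PN Ont P n))" for n
  have f_eq_iff: "f m = f n \<longleftrightarrow> PN Ont P m = PN Ont P n" for m n
  proof
    assume "f m = f n"
    then have "fst (PN Ont P m) = fst (PN Ont P n)" "snd (PN Ont P m) = snd (PN Ont P n)"
      using PN_subset_KA[of Ont P m] PN_subset_KA[of Ont P n] unfolding f_def prod.inject by blast+
    then show "PN Ont P m = PN Ont P n"
      by (simp add: prod_eq_iff)
  qed (simp add: f_def)
  have "range f \<subseteq> Pow ?A \<times> Pow ?A"
    unfolding f_def using PN_subset_KA by blast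
  then have "finite (range f)"
    using finite_KA[OF assms] finite_subset by blast
  moreover have "mono f"
  proof (rule monoI)
    fix m n :: nat
    assume "m \<le> n"
    then show "f m \<le> f n"
      using monoD[OF mono_fst_PN[of Ont P] \<open>m \<le> n\<close>]
        antimonoD[OF antimono_snd_PN[of Ont P] \<open>m \<le> n\<close>]
      unfolding f_def less_eq_prod_def by auto
  qed
  moreover have "\<forall>n. f n = f (Suc n) \<longrightarrow> f (Suc n) = f (Suc (Suc n))"
  proof (intro allI impI)
    fix n
    assume "f n = f (Suc n)"
    then have "PN Ont P (Suc n) = PN Ont P n"
      by (simp only: f_eq_iff eq_commute)
    then have "PN Ont P (Suc (Suc n)) = PN Ont P (Suc n)"
      unfolding PN.simps(2)[of Ont P "Suc n"] by simp
    then show "f (Suc n) = f (Suc (Suc n))"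
      by (simp only: f_eq_iff eq_commute)
  qed
  ultimately obtain N where "\<forall>n\<ge>N. f N = f n"
    using finite_mono_remains_stable_implies_strict_prefix[of f] by blast
  then have "PN Ont P n = PN Ont P N" if "N \<le> n" for n
    using that by (simp add: f_eq_iff)
  then show ?thesis
    by (rule that)
qed

lemma alternating_fixpoint_partition_fixpoint:
  assumes "finite Ont" and "finite P"
  shows "Gamma Ont P (N_omega Ont P) = P_omega Ont P"
    and "Gamma' Ont P (P_omega Ont P) = N_omega Ont P"
proof -
  obtain N where N: "\<And>n. N \<le> n \<Longrightarrow> PN Ont P n = PN Ont P N"
    using PN_eventually_constant[OF assms] by blast
  have "fst (PN Ont P n) \<subseteq> fst (PN Ont P N)" for n
    using monoD[OF mono_fst_PN[of Ont P], of n "max n N"] N[of "max n N"] by simp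
  then have Pw: "P_omega Ont P = fst (PN Ont P N)"
    unfolding P_omega_def by blast
  have "snd (PN Ont P N) \<subseteq> snd (PN Ont P n)" for n
    using antimonoD[OF antimono_snd_PN[of Ont P], of n "max n N"] N[of "max n N"] by simp
  then have Nw: "N_omega Ont P = snd (PN Ont P N)"
    unfolding N_omega_def by blast
  have "(Gamma Ont P (snd (PN Ont P N)), Gamma' Ont P (fst (PN Ont P N))) = PN Ont P N"
    using N[of "Suc N"] by (simp only: PN.simps(2) le_Suc_eq order_refl simp_thms)
  then show "Gamma Ont P (N_omega Ont P) = P_omega Ont P"
    and "Gamma' Ont P (P_omega Ont P) = N_omega Ont P"
    unfolding Pw Nw by (metis fst_conv snd_conv)+
qed

theorem theorem1:
  fixes Ont :: "('p, 'c) axiom set" and P :: "('p, 'v, 'c) rule set"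
    and IT IF :: "('p, 'c) gatom set"
  assumes "finite Ont" and "finite P"
    and "DL_safe Ont P"
    and "lfp (IFP Ont P) = (IT, IF)"
  shows "(P_omega Ont P, N_omega Ont P) = (IT, KA Ont P - IF)"
proof -
  have "IFP Ont P (IT, IF) = (IT, IF)"
    using lfp_fixpoint[OF mono_IFP] assms(4) by metis
  then have "P_omega Ont P \<subseteq> IT" and "KA Ont P - IF \<subseteq> N_omega Ont P"
    using PN_bounded_by_IFP_fixpoint unfolding P_omega_def N_omega_def by blast+
  moreover have "IT \<subseteq> P_omega Ont P" and "IF \<subseteq> KA Ont P - N_omega Ont P"
    using lfp_IFP_le_alternating_fixpoint[OF alternating_fixpoint_partition_fixpoint[OF assms(1,2)]]
      assms(4) by (simp_all add: less_eq_prod_def)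
  moreover have "N_omega Ont P \<subseteq> KA Ont P"
    unfolding N_omega_def using INT_lower[of 0 UNIV "\<lambda>n. snd (PN Ont P n)"] by simp
  ultimately have "P_omega Ont P = IT" and "N_omega Ont P = KA Ont P - IF"
    by blast+
  then show ?thesis by simp
qed

end
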